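(* Let $G$ be a finite abelian group, $H_1$ a subgroup of $G$, and $A_1$ a proper subset of $H_1$ such that the elements $x-y$ ($x,y\in A_1$) generate $H_1$. Let $S$ be the set of all subgroups $J\le G$ such that $A_1$ is a union of cosets of $J$. Choose any set (possibly empty) of cosets of $H_1$ different from $H_1$ itself, and partition each chosen coset into cosets of subgroups belonging to $S$. Let $\mathcal{A}$ consist of $A_1$ together with all sets in these partitions. Then $\mathcal{A}$ is a bimodal collection of pairwise disjoint subsets of $G$ in which $A_1$ is the unique member whose size is smaller than the order of its internal difference group.
   Context: $G$ is written additively. The internal difference group of a subset $T\subseteq G$ is the subgroup generated by all $x-y$ with $x,y\in T$. A collection $\{A_1,\dots,A_m\}$ of pairwise disjoint subsets of $G$ is bimodal if for every $i$ and every $\delta\in G\setminus\{0\}$, the number $N_i(\delta)$ of pairs $(a,b)$ with $a\in A_i$, $b\in A_j$ for some $j\neq i$, and $a-b=\delta$, satisfies $N_i(\delta)\in\{0,|A_i|\}$. *)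

theory Defs
  imports Main "HOL-Library.Disjoint_Sets"
begin

text \<open>The finite abelian group G is the ambient type 'a :: {finite, ab_group_add}.\<close>

definition subgrp :: "'a::ab_group_add set \<Rightarrow> bool" where
  "subgrp H \<longleftrightarrow> 0 \<in> H \<and> (\<forall>x\<in>H. \<forall>y\<in>H. x - y \<in> H)"

definition coset :: "'a::ab_group_add \<Rightarrow> 'a set \<Rightarrow> 'a set" where
  "coset x J = (\<lambda>j. x + j) ` J"

definition cosets :: "'a::ab_group_add set \<Rightarrow> 'a set set" where
  "cosets J = {coset x J | x. True}"

definition idg :: "'a::ab_group_add set \<Rightarrow> 'a set" where
  "idg T = \<Inter>{H. subgrp H \<and> {x - y | x y. x \<in> T \<and> y \<in> T} \<subseteq> H}"

definition union_of_cosets :: "'a::ab_group_add set \<Rightarrow> 'a set \<Rightarrow> bool" where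
  "union_of_cosets A J \<longleftrightarrow> (\<exists>C \<subseteq> cosets J. A = \<Union>C)"

definition Ncount :: "'a::ab_group_add set set \<Rightarrow> 'a set \<Rightarrow> 'a \<Rightarrow> nat" where
  "Ncount \<A> A \<delta> = card {(a, b). a \<in> A \<and> (\<exists>B\<in>\<A>. B \<noteq> A \<and> b \<in> B) \<and> a - b = \<delta>}"

definition bimodal :: "'a::ab_group_add set set \<Rightarrow> bool" where
  "bimodal \<A> \<longleftrightarrow> disjoint \<A> \<and>
     (\<forall>A\<in>\<A>. \<forall>\<delta>. \<delta> \<noteq> 0 \<longrightarrow> Ncount \<A> A \<delta> \<in> {0, card A})"

end

theory Submission
  imports Defs
begin

text \<open>Every member A of the collection lies in a coset of a subgroup K such that the union of
  the other members is invariant under translation by K. Then, for a fixed \<delta>, the element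
  a - \<delta> lies in another member either for all a \<in> A or for none, which is bimodality.
  For A1 take K = H1, since the other members tile the cosets in Cs. For a piece that is a coset
  of J take K = J: the piece lies in a coset of H1, so J \<subseteq> H1, and A1, the union of Cs and the
  piece itself are all unions of cosets of J. Pieces are cosets, so their size equals that of their
  difference group, whereas A1 is a proper subset of its difference group H1.\<close>

lemma subgrp_zero: "subgrp H \<Longrightarrow> 0 \<in> H"
  unfolding subgrp_def by blast

lemma subgrp_diff: "subgrp H \<Longrightarrow> x \<in> H \<Longrightarrow> y \<in> H \<Longrightarrow> x - y \<in> H"
  unfolding subgrp_def by blast

lemma subgrp_uminus: "subgrp H \<Longrightarrow> x \<in> H \<Longrightarrow> - x \<in> H"
  using subgrp_diff[of H 0 x] by (simp add: subgrp_zero)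

lemma subgrp_add: "subgrp H \<Longrightarrow> x \<in> H \<Longrightarrow> y \<in> H \<Longrightarrow> x + y \<in> H"
  using subgrp_diff[of H x "- y"] by (simp add: subgrp_uminus)

lemma mem_coset_iff: "z \<in> coset x J \<longleftrightarrow> z - x \<in> J"
  unfolding coset_def by (auto simp: image_iff intro!: bexI[of _ "z - x"])

lemma coset_zero [simp]: "coset 0 J = J"
  by (simp add: coset_def)

lemma diff_mem_coset: "subgrp J \<Longrightarrow> z \<in> coset x J \<Longrightarrow> w \<in> coset x J \<Longrightarrow> z - w \<in> J"
  using subgrp_diff[of J "z - x" "w - x"] by (simp add: mem_coset_iff)

lemma coset_eqI:
  assumes "subgrp J" "z \<in> coset x J" "z \<in> coset y J"
  shows "coset x J = coset y J"
proof (rule set_eqI)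
  have xy: "x - y \<in> J"
    using subgrp_diff[OF assms(1), of "z - y" "z - x"] assms(2,3) by (simp add: mem_coset_iff)
  fix w
  have "w - x \<in> J \<longleftrightarrow> w - y \<in> J"
    using subgrp_add[OF assms(1) _ xy, of "w - x"] subgrp_diff[OF assms(1) _ xy, of "w - y"]
    by (auto simp: algebra_simps)
  then show "w \<in> coset x J \<longleftrightarrow> w \<in> coset y J"
    by (simp add: mem_coset_iff)
qed

lemma disjoint_cosets: "subgrp J \<Longrightarrow> disjoint (cosets J)"
  unfolding cosets_def by (auto intro!: disjointI dest: coset_eqI)

lemma union_of_cosets_coset: "union_of_cosets (coset x J) J"
  unfolding union_of_cosets_def cosets_def by (intro exI[of _ "{coset x J}"]) auto

lemma card_coset: "card (coset x J) = card J"
  unfolding coset_def by (rule card_image) (simp add: inj_on_def)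

lemma idg_least:
  assumes "subgrp H" "\<And>x y. x \<in> T \<Longrightarrow> y \<in> T \<Longrightarrow> x - y \<in> H"
  shows "idg T \<subseteq> H"
  unfolding idg_def using assms by (intro Inter_lower CollectI conjI subsetI) auto

lemma diff_mem_idg: "x \<in> T \<Longrightarrow> y \<in> T \<Longrightarrow> x - y \<in> idg T"
  unfolding idg_def by auto

lemma idg_mono:
  assumes "A \<subseteq> B"
  shows "idg A \<subseteq> idg B"
proof -
  have "{x - y |x y. x \<in> A \<and> y \<in> A} \<subseteq> {x - y |x y. x \<in> B \<and> y \<in> B}"
    using assms by blast
  then show ?thesis
    unfolding idg_def by (intro Inter_anti_mono) blast
qed

lemma idg_coset:
  assumes "subgrp J"
  shows "idg (coset x J) = J"
proof
  show "idg (coset x J) \<subseteq> J"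
    using idg_least[OF assms] diff_mem_coset[OF assms] by blast
  show "J \<subseteq> idg (coset x J)"
  proof
    fix j assume "j \<in> J"
    then have "x + j \<in> coset x J" "x \<in> coset x J"
      using subgrp_zero[OF assms] by (simp_all add: mem_coset_iff)
    then have "(x + j) - x \<in> idg (coset x J)"
      by (rule diff_mem_idg)
    then show "j \<in> idg (coset x J)"
      by simp
  qed
qed

lemma subgrp_subset_if_coset_subset:
  assumes "subgrp J" "subgrp H" "coset x J \<subseteq> coset y H"
  shows "J \<subseteq> H"
  using idg_mono[OF assms(3)] by (simp add: idg_coset assms(1,2))

definition translation_invariant :: "'a::ab_group_add set \<Rightarrow> 'a set \<Rightarrow> bool" where
  "translation_invariant S K \<longleftrightarrow> (\<forall>z\<in>S. \<forall>d\<in>K. z + d \<in> S)"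

lemma translation_invariant_if_union_of_cosets:
  assumes "subgrp J" "union_of_cosets A J"
  shows "translation_invariant A J"
  unfolding translation_invariant_def
proof (intro ballI)
  fix z d assume "z \<in> A" "d \<in> J"
  obtain C where C: "C \<subseteq> cosets J" "A = \<Union>C"
    using assms(2) unfolding union_of_cosets_def by blast
  then obtain x where "coset x J \<in> C" "z \<in> coset x J"
    using \<open>z \<in> A\<close> unfolding cosets_def by blast
  moreover have "z + d \<in> coset x J"
    using \<open>z \<in> coset x J\<close> \<open>d \<in> J\<close> subgrp_add[OF assms(1), of "z - x" d]
    by (simp add: mem_coset_iff algebra_simps)
  ultimately show "z + d \<in> A"
    using C by blast
qed

lemma translation_invariant_mono:
  "translation_invariant S H \<Longrightarrow> J \<subseteq> H \<Longrightarrow> translation_invariant S J"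
  unfolding translation_invariant_def by blast

lemma translation_invariant_Un:
  "translation_invariant S K \<Longrightarrow> translation_invariant T K \<Longrightarrow> translation_invariant (S \<union> T) K"
  unfolding translation_invariant_def by blast

lemma translation_invariant_Diff:
  assumes "subgrp K" "translation_invariant S K" "translation_invariant T K"
  shows "translation_invariant (S - T) K"
  unfolding translation_invariant_def
proof (intro ballI)
  fix z d assume "z \<in> S - T" "d \<in> K"
  have "z + d \<notin> T"
  proof
    assume "z + d \<in> T"
    then have "(z + d) + - d \<in> T"
      using assms(3) subgrp_uminus[OF assms(1) \<open>d \<in> K\<close>] unfolding translation_invariant_def by blast
    then show False
      using \<open>z \<in> S - T\<close> by simp
  qed
  then show "z + d \<in> S - T"
    using assms(2) \<open>z \<in> S - T\<close> \<open>d \<in> K\<close> unfolding translation_invariant_def by blast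
qed

lemma Ncount_eq_card_shifted:
  "Ncount \<A> A \<delta> = card {a \<in> A. a - \<delta> \<in> \<Union>(\<A> - {A})}"
proof -
  let ?S = "{a \<in> A. a - \<delta> \<in> \<Union>(\<A> - {A})}"
  have "{(a, b). a \<in> A \<and> (\<exists>B\<in>\<A>. B \<noteq> A \<and> b \<in> B) \<and> a - b = \<delta>} = (\<lambda>a. (a, a - \<delta>)) ` ?S"
  proof (intro equalityI subsetI)
    fix p assume "p \<in> {(a, b). a \<in> A \<and> (\<exists>B\<in>\<A>. B \<noteq> A \<and> b \<in> B) \<and> a - b = \<delta>}"
    then obtain a b where ab: "p = (a, b)" "a \<in> A" "b \<in> \<Union>(\<A> - {A})" "a - b = \<delta>"
      by blast
    have "b = a - (a - b)"
      by simp
    with ab(4) have "b = a - \<delta>"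
      by simp
    then show "p \<in> (\<lambda>a. (a, a - \<delta>)) ` ?S"
      using ab(1-3) by blast
  next
    fix p assume "p \<in> (\<lambda>a. (a, a - \<delta>)) ` ?S"
    then obtain a where "p = (a, a - \<delta>)" "a \<in> A" "a - \<delta> \<in> \<Union>(\<A> - {A})"
      by blast
    then show "p \<in> {(a, b). a \<in> A \<and> (\<exists>B\<in>\<A>. B \<noteq> A \<and> b \<in> B) \<and> a - b = \<delta>}"
      by auto
  qed
  moreover have "inj_on (\<lambda>a. (a, a - \<delta>)) ?S"
    by (simp add: inj_on_def)
  ultimately show ?thesis
    unfolding Ncount_def by (simp only: card_image)
qed

lemma Ncount_dichotomy:
  assumes "subgrp K" "A \<subseteq> coset x K" "translation_invariant (\<Union>(\<A> - {A})) K"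
  shows "Ncount \<A> A \<delta> \<in> {0, card A}"
proof (cases "\<exists>a \<in> A. a - \<delta> \<in> \<Union>(\<A> - {A})")
  case True
  then obtain a where a: "a \<in> A" "a - \<delta> \<in> \<Union>(\<A> - {A})" ..
  have "a' - \<delta> \<in> \<Union>(\<A> - {A})" if "a' \<in> A" for a'
  proof -
    have "a' - a \<in> K"
      using diff_mem_coset[OF assms(1)] assms(2) a(1) that by blast
    then have "(a - \<delta>) + (a' - a) \<in> \<Union>(\<A> - {A})"
      using assms(3) a(2) unfolding translation_invariant_def by blast
    moreover have "(a - \<delta>) + (a' - a) = a' - \<delta>"
      by (simp add: algebra_simps)
    ultimately show ?thesis
      by simp
  qed
  then have all: "{a \<in> A. a - \<delta> \<in> \<Union>(\<A> - {A})} = A"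
    by blast
  show ?thesis
    unfolding Ncount_eq_card_shifted all by simp
next
  case False
  then have none: "{a \<in> A. a - \<delta> \<in> \<Union>(\<A> - {A})} = {}"
    by blast
  show ?thesis
    unfolding Ncount_eq_card_shifted none by simp
qed

lemma bimodalI:
  assumes "disjoint \<A>"
    and "\<And>A. A \<in> \<A> \<Longrightarrow>
      \<exists>K x. subgrp K \<and> A \<subseteq> coset x K \<and> translation_invariant (\<Union>\<A> - A) K"
  shows "bimodal \<A>"
  unfolding bimodal_def
proof (intro conjI assms(1) ballI allI impI)
  fix A \<delta> assume "A \<in> \<A>"
  then have "\<Union>\<A> - A = \<Union>(\<A> - {A})"
    using diff_Union_pairwise_disjoint[OF assms(1), of "{A}"] by simp
  then show "Ncount \<A> A \<delta> \<in> {0, card A}"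
    using assms(2)[OF \<open>A \<in> \<A>\<close>] Ncount_dichotomy by metis
qed

locale coset_refinement =
  fixes H1 A1 :: "'a::{finite, ab_group_add} set"
    and Cs :: "'a set set"
    and P :: "'a set \<Rightarrow> 'a set set"
  assumes subgrp_H1: "subgrp H1"
    and A1_psubset: "A1 \<subset> H1"
    and idg_A1: "idg A1 = H1"
    and Cs_cosets: "Cs \<subseteq> cosets H1 - {H1}"
    and partition_P: "C \<in> Cs \<Longrightarrow> partition_on C (P C)"
    and piece_coset:
      "C \<in> Cs \<Longrightarrow> B \<in> P C \<Longrightarrow> \<exists>J. subgrp J \<and> union_of_cosets A1 J \<and> B \<in> cosets J"
begin

abbreviation pieces :: "'a set set" where
  "pieces \<equiv> \<Union>C\<in>Cs. P C"

lemma Union_pieces: "\<Union>pieces = \<Union>Cs"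
  using partition_onD1[OF partition_P] by blast

lemma disjoint_pieces: "disjoint pieces"
proof (rule disjoint_UN)
  show "disjoint (P C)" if "C \<in> Cs" for C
    using partition_onD2[OF partition_P[OF that]] .
  have "disjoint Cs"
    using disjoint_cosets[OF subgrp_H1] Cs_cosets pairwise_subset by blast
  then show "disjoint_family_on (\<lambda>C. \<Union>(P C)) Cs"
    unfolding disjoint_family_on_def
    by (metis disjointD partition_onD1 partition_P)
qed

lemma A1_disjoint_Cs: "A1 \<inter> \<Union>Cs = {}"
proof -
  have "H1 \<in> cosets H1"
    unfolding cosets_def by (metis (mono_tags) coset_zero mem_Collect_eq)
  then have "H1 \<inter> C = {}" if "C \<in> Cs" for C
    using disjoint_cosets[OF subgrp_H1] Cs_cosets that by (auto dest: disjointD)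
  then show ?thesis
    using A1_psubset by blast
qed

lemma piece_coset_of_subgroup:
  assumes "C \<in> Cs" "B \<in> P C"
  obtains J x where "subgrp J" "J \<subseteq> H1" "union_of_cosets A1 J" "B = coset x J"
proof -
  obtain J x where J: "subgrp J" "union_of_cosets A1 J" "B = coset x J"
    using piece_coset[OF assms] unfolding cosets_def by blast
  obtain y where "C = coset y H1"
    using Cs_cosets assms(1) unfolding cosets_def by blast
  then have "J \<subseteq> H1"
    using partition_onD1[OF partition_P[OF assms(1)]] assms(2) J(1,3)
      subgrp_subset_if_coset_subset[OF _ subgrp_H1] by blast
  then show thesis
    using that J by blast
qed

lemma disjoint_collection: "disjoint (insert A1 pieces)"
proof -
  have "B \<inter> A1 = {}" if "B \<in> pieces" for B
    using that A1_disjoint_Cs Union_pieces by blast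
  then show ?thesis
    using disjoint_pieces by (auto simp: pairwise_insert disjnt_def)
qed

lemma bimodal_collection: "bimodal (insert A1 pieces)"
proof (rule bimodalI[OF disjoint_collection])
  have Union_collection: "\<Union>(insert A1 pieces) = A1 \<union> \<Union>Cs"
    using Union_pieces by simp
  have "union_of_cosets (\<Union>Cs) H1"
    unfolding union_of_cosets_def using Cs_cosets by blast
  then have Cs_invariant: "translation_invariant (\<Union>Cs) H1"
    by (rule translation_invariant_if_union_of_cosets[OF subgrp_H1])
  fix A assume "A \<in> insert A1 pieces"
  then consider "A = A1" | C where "C \<in> Cs" "A \<in> P C"
    by blast
  then show "\<exists>K x. subgrp K \<and> A \<subseteq> coset x K \<and> translation_invariant (\<Union>(insert A1 pieces) - A) K"
  proof cases
    case 1
    then have "\<Union>(insert A1 pieces) - A = \<Union>Cs"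
      using Union_collection A1_disjoint_Cs by blast
    moreover have "A \<subseteq> coset 0 H1"
      using 1 A1_psubset by simp
    ultimately show ?thesis
      using subgrp_H1 Cs_invariant by (intro exI[of _ H1] exI[of _ 0]) simp
  next
    case 2
    then obtain J x where J: "subgrp J" "J \<subseteq> H1" "union_of_cosets A1 J" "A = coset x J"
      by (rule piece_coset_of_subgroup)
    have "translation_invariant (A1 \<union> \<Union>Cs) J"
      using translation_invariant_if_union_of_cosets[OF J(1,3)]
        translation_invariant_mono[OF Cs_invariant J(2)] by (rule translation_invariant_Un)
    moreover have "translation_invariant A J"
      unfolding J(4) by (rule translation_invariant_if_union_of_cosets[OF J(1) union_of_cosets_coset])
    ultimately have "translation_invariant (\<Union>(insert A1 pieces) - A) J"
      unfolding Union_collection by (rule translation_invariant_Diff[OF J(1)])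
    then show ?thesis
      using J(1,4) by (intro exI[of _ J] exI[of _ x]) simp
  qed
qed

lemma card_lt_card_idg_iff:
  assumes "A \<in> insert A1 pieces"
  shows "card A < card (idg A) \<longleftrightarrow> A = A1"
proof (cases "A = A1")
  case True
  then show ?thesis
    using A1_psubset idg_A1 by (simp add: psubset_card_mono)
next
  case False
  then obtain C where "C \<in> Cs" "A \<in> P C"
    using assms by blast
  then obtain J x where "subgrp J" "A = coset x J"
    by (rule piece_coset_of_subgroup)
  then show ?thesis
    using False by (simp add: idg_coset card_coset)
qed

end

theorem theorem3p17:
  fixes H1 A1 :: "'a::{finite, ab_group_add} set"
    and Cs :: "'a set set"
    and P :: "'a set \<Rightarrow> 'a set set"
    and \<A> :: "'a set set"
  assumes "subgrp H1"
    and "A1 \<subset> H1"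
    and "idg A1 = H1"
    and "Cs \<subseteq> cosets H1 - {H1}"
    and "\<forall>C\<in>Cs. partition_on C (P C) \<and>
           (\<forall>B\<in>P C. \<exists>J. subgrp J \<and> union_of_cosets A1 J \<and> B \<in> cosets J)"
    and "\<A> = insert A1 (\<Union>C\<in>Cs. P C)"
  shows "disjoint \<A> \<and> bimodal \<A> \<and>
         (\<forall>A\<in>\<A>. card A < card (idg A) \<longleftrightarrow> A = A1)"
proof -
  interpret coset_refinement H1 A1 Cs P
    using assms(1-5) by unfold_locales auto
  show ?thesis
    using assms(6) disjoint_collection bimodal_collection card_lt_card_idg_iff by blast
qed

end
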